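(* Let $k$ be a field, $A=kQ_A/I_A$ a monomial algebra with vertices $e_1,\dots,e_n$, and $B$ the algebra obtained by gluing the distinct non-isolated vertices $e_1,e_n$. Assume that for every loop $\alpha$ at $e_1$ or $e_n$ with $\alpha^m\in Z_A$ for some $m\ge2$, $\mathrm{char}(k)\nmid m$. Then $\dim_k\mathrm{Ker}(\delta^1_B)=\dim_k\mathrm{Ker}(\delta^1_A)+\mathrm{kspp}(1,n)$.
   Context: Monomial algebra: $A=kQ_A/I_A$, $Q_A$ finite quiver, $I_A$ admissible, generated by a minimal set $Z_A$ of paths of length $\ge2$; $\mathcal B_A$: paths (including trivial ones) avoiding elements of $Z_A$ as subpaths. Gluing: $B\subseteq A$ generated by $f_1=e_1+e_n$, $f_i=e_i$ ($2\le i\le n-1$) and all arrows; $B\cong kQ_B/I_B$, $Q_B$ obtained by identifying $e_1,e_n$ to $f_1$ (arrow $\alpha\mapsto\alpha^*$, path $p=a_m\cdots a_1\mapsto p^*=a_m^*\cdots a_1^*$, $e_i^*=f_i$, $e_1^*=e_n^*=f_1$), $I_B$ generated by $Z_B=\{r^*:r\in Z_A\}\cup\{b^*c^*: b,c\text{ arrows},\ t(c),s(b)\in\{e_1,e_n\},\ t(c)\ne s(b)\}$; $\mathcal B_B$ its basis paths. For path sets $X,Y$, $k(X\|Y)$ has basis the pairs $x\|y$ of parallel paths. For monomial $\Lambda=kQ/\langle Z\rangle$ with basis paths $\mathcal B$, $\delta^1:k(Q_1\|\mathcal B)\to k(Z\|\mathcal B)$, $a\|\gamma\mapsto\sum_{r\in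 Z}r\|r^{a\|\gamma}$, where $r^{a\|\gamma}$ is the sum over occurrences of $a$ in $r$ of the path obtained by replacing that occurrence by $\gamma$, keeping only paths in $\mathcal B$; $\delta^1_A,\delta^1_B$ denote these for $A,B$. A special pair is $(\alpha,p)$ with $\alpha$ an arrow of $Q_A$ starting or ending at $e_1$ or $e_n$, $p\in\mathcal B_A$, $\alpha^*$ parallel to $p^*$ in $Q_B$, and $\alpha$ not parallel to $p$ in $Q_A$. $Z_{spp}$ is the intersection of $\mathrm{Ker}\,\delta^1_B$ with the span of all $\alpha^*\|p^*$ over special pairs, and $\mathrm{kspp}(1,n)=\dim_kZ_{spp}$. *)

theory Defs
  imports Complex_Main "HOL-Library.Sublist" "HOL-Library.Function_Algebras"
begin

text \<open>
A path is a pair (v, as): v is its starting vertex and as is its list of arrows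
in the order of traversal (so the paper's p = a_m ... a_1 is (s a_1, [a_1, ..., a_m])).
The trivial path e_v is (v, []).  Relations (elements of Z) are nonempty paths,
represented by their arrow lists.
\<close>

type_synonym 'a path = "nat \<times> 'a list"

definition is_path :: "nat set \<Rightarrow> 'a set \<Rightarrow> ('a \<Rightarrow> nat) \<Rightarrow> ('a \<Rightarrow> nat) \<Rightarrow> 'a path \<Rightarrow> bool" where
  "is_path V E s t x \<longleftrightarrow>
     fst x \<in> V \<and> set (snd x) \<subseteq> E \<and>
     (snd x \<noteq> [] \<longrightarrow> s (hd (snd x)) = fst x) \<and>
     (\<forall>i. Suc i < length (snd x) \<longrightarrow> t (snd x ! i) = s (snd x ! Suc i))"

definition pend :: "('a \<Rightarrow> nat) \<Rightarrow> 'a path \<Rightarrow> nat" where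
  "pend t x = (if snd x = [] then fst x else t (last (snd x)))"

text \<open>Monomial algebra data: finite quiver on vertices 1..n, Z a finite minimal set of
paths of length at least 2 generating an admissible ideal (every sufficiently long path
contains an element of Z as a subpath).\<close>

definition monomial_data :: "nat \<Rightarrow> 'a set \<Rightarrow> ('a \<Rightarrow> nat) \<Rightarrow> ('a \<Rightarrow> nat) \<Rightarrow> 'a list set \<Rightarrow> bool" where
  "monomial_data n E s t Z \<longleftrightarrow>
     finite E \<and> (\<forall>a\<in>E. s a \<in> {1..n} \<and> t a \<in> {1..n}) \<and>
     finite Z \<and>
     (\<forall>r\<in>Z. length r \<ge> 2 \<and> is_path {1..n} E s t (s (hd r), r)) \<and>
     (\<forall>r\<in>Z. \<forall>r'\<in>Z. sublist r r' \<longrightarrow> r = r') \<and>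
     (\<exists>N. \<forall>x. is_path {1..n} E s t x \<and> length (snd x) \<ge> N \<longrightarrow> (\<exists>r\<in>Z. sublist r (snd x)))"

definition basis_paths :: "nat set \<Rightarrow> 'a set \<Rightarrow> ('a \<Rightarrow> nat) \<Rightarrow> ('a \<Rightarrow> nat) \<Rightarrow> 'a list set \<Rightarrow> 'a path set" where
  "basis_paths V E s t Z = {x. is_path V E s t x \<and> (\<forall>r\<in>Z. \<not> sublist r (snd x))}"

text \<open>Basis of k(Q_1 || B): pairs (a, gamma) of an arrow and a parallel basis path.\<close>

definition par1 :: "nat set \<Rightarrow> 'a set \<Rightarrow> ('a \<Rightarrow> nat) \<Rightarrow> ('a \<Rightarrow> nat) \<Rightarrow> 'a list set \<Rightarrow> ('a \<times> 'a path) set" where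
  "par1 V E s t Z = {(a, g). a \<in> E \<and> g \<in> basis_paths V E s t Z \<and> s a = fst g \<and> t a = pend t g}"

text \<open>Elements of k(Q_1 || B), as coefficient functions supported on par1.\<close>

definition cochains1 :: "nat set \<Rightarrow> 'a set \<Rightarrow> ('a \<Rightarrow> nat) \<Rightarrow> ('a \<Rightarrow> nat) \<Rightarrow> 'a list set \<Rightarrow> ('a \<times> 'a path \<Rightarrow> 'k::field) set" where
  "cochains1 V E s t Z = {f. \<forall>x. x \<notin> par1 V E s t Z \<longrightarrow> f x = 0}"

definition replace_at :: "('a \<Rightarrow> nat) \<Rightarrow> 'a list \<Rightarrow> nat \<Rightarrow> 'a path \<Rightarrow> 'a path" where
  "replace_at s r i g = (s (hd r), take i r @ snd g @ drop (Suc i) r)"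

text \<open>delta^1 on k(Q_1 || B) with values in k(Z || B), the latter as coefficient functions of
pairs (r, q): the coefficient of r||q in delta^1(f) is the sum over basis pairs a||g of
f(a||g) times the number of occurrences of a in r whose replacement by g yields q,
q being a basis path.\<close>

definition delta1 :: "nat set \<Rightarrow> 'a set \<Rightarrow> ('a \<Rightarrow> nat) \<Rightarrow> ('a \<Rightarrow> nat) \<Rightarrow> 'a list set \<Rightarrow>
    ('a \<times> 'a path \<Rightarrow> 'k::field) \<Rightarrow> ('a list \<times> 'a path \<Rightarrow> 'k)" where
  "delta1 V E s t Z f = (\<lambda>(r, q).
     if r \<in> Z then
       (\<Sum>(a, g)\<in>par1 V E s t Z. f (a, g) *
          of_nat (card {i. i < length r \<and> r ! i = a \<and> replace_at s r i g = q \<and>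
                           q \<in> basis_paths V E s t Z}))
     else 0)"

definition ker_delta1 :: "nat set \<Rightarrow> 'a set \<Rightarrow> ('a \<Rightarrow> nat) \<Rightarrow> ('a \<Rightarrow> nat) \<Rightarrow> 'a list set \<Rightarrow>
    ('a \<times> 'a path \<Rightarrow> 'k::field) set" where
  "ker_delta1 V E s t Z = {f \<in> cochains1 V E s t Z. delta1 V E s t Z f = (\<lambda>_. 0)}"

definition fscale :: "'k::field \<Rightarrow> ('b \<Rightarrow> 'k) \<Rightarrow> ('b \<Rightarrow> 'k)" where
  "fscale c f = (\<lambda>x. c * f x)"

abbreviation kdim :: "('b \<Rightarrow> 'k::field) set \<Rightarrow> nat" where
  "kdim S \<equiv> vector_space.dim fscale S"

abbreviation kspan :: "('b \<Rightarrow> 'k::field) set \<Rightarrow> ('b \<Rightarrow> 'k) set" where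
  "kspan S \<equiv> module.span fscale S"

text \<open>Gluing e_1 and e_n: the identification map on vertices; Q_B has vertices 1..n-1,
the same arrows, source phi o s and target phi o t.\<close>

definition glue :: "nat \<Rightarrow> nat \<Rightarrow> nat" where
  "glue n v = (if v = n then 1 else v)"

text \<open>Z_B: the relations r* for r in Z_A together with b*c* (traversal: c then b) for arrows
b, c with t(c), s(b) in {e_1, e_n} and t(c) distinct from s(b).\<close>

definition glued_Z :: "nat \<Rightarrow> 'a set \<Rightarrow> ('a \<Rightarrow> nat) \<Rightarrow> ('a \<Rightarrow> nat) \<Rightarrow> 'a list set \<Rightarrow> 'a list set" where
  "glued_Z n E s t Z = Z \<union>
     {[c, b] | b c. b \<in> E \<and> c \<in> E \<and> t c \<in> {1, n} \<and> s b \<in> {1, n} \<and> t c \<noteq> s b}"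

definition path_star :: "nat \<Rightarrow> 'a path \<Rightarrow> 'a path" where
  "path_star n p = (glue n (fst p), snd p)"

definition special_pair :: "nat \<Rightarrow> 'a set \<Rightarrow> ('a \<Rightarrow> nat) \<Rightarrow> ('a \<Rightarrow> nat) \<Rightarrow> 'a list set \<Rightarrow> 'a \<Rightarrow> 'a path \<Rightarrow> bool" where
  "special_pair n E s t Z \<alpha> p \<longleftrightarrow>
     \<alpha> \<in> E \<and> (s \<alpha> \<in> {1, n} \<or> t \<alpha> \<in> {1, n}) \<and>
     p \<in> basis_paths {1..n} E s t Z \<and>
     glue n (s \<alpha>) = glue n (fst p) \<and> glue n (t \<alpha>) = glue n (pend t p) \<and>
     \<not> (s \<alpha> = fst p \<and> t \<alpha> = pend t p)"

definition kspp :: "'k::field itself \<Rightarrow> nat \<Rightarrow> 'a set \<Rightarrow> ('a \<Rightarrow> nat) \<Rightarrow> ('a \<Rightarrow> nat) \<Rightarrow> 'a list set \<Rightarrow> nat" where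
  "kspp _ n E s t Z =
     kdim (ker_delta1 {1..n-1} E (glue n \<circ> s) (glue n \<circ> t) (glued_Z n E s t Z) \<inter>
           kspan {(\<lambda>x. if x = (\<alpha>, path_star n p) then 1 else 0) :: 'a \<times> 'a path \<Rightarrow> 'k
                  | \<alpha> p. special_pair n E s t Z \<alpha> p})"

end

(*
  Ker delta1_B splits as the cocycles vanishing on the special pairs plus the
  cocycles supported on them, and the second summand has dimension kspp(1,n).
  The reason is that the two kinds of pairs never contribute to the same row
  r||q of delta1_B for a relation r of A: a non-special pair alpha*||p* comes from
  a pair alpha||p parallel in A, so replacing alpha by p in r gives a path of A with
  the endpoints of r, whereas the path of a special pair cannot replace alpha in r
  without changing them.  The only exceptions are the pairs alpha*||f_1 with alpha
  a loop at v = e_1 or e_n (glued from alpha||e_w, w the other end).  They vanish on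
  every cocycle of B, and alpha||e_v on every cocycle of A, because delta1 at the
  row alpha^m||alpha^(m-1), alpha^m being the relation forced by admissibility, is
  m times the value at the loop pair, and m is invertible in k by the hypothesis on
  the characteristic.  Finally, gluing alpha||p to alpha*||p* is injective and hits
  every non-special pair, a path of A is a basis path exactly when its glued copy
  is one of B, and the new relations b*c* of B meet only special pairs; so pulling
  back along the gluing identifies the first summand with Ker delta1_A.
*)
theory Submission
  imports Defs
begin

section \<open>Direct sums of spaces of coefficient functions\<close>

lemma (in vector_space) independent_Un_subspaces:
  assumes S: "subspace S" "B \<subseteq> S" "independent B" "finite B"
    and T: "subspace T" "C \<subseteq> T" "independent C" "finite C"
    and ST: "S \<inter> T = {0}"
  shows "independent (B \<union> C)" "B \<inter> C = {}"
proof -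
  have "B \<inter> C \<subseteq> {0}" "0 \<notin> B"
    using S(2,3) T(2) ST dependent_zero by blast+
  then show disj: "B \<inter> C = {}"
    by blast
  show "independent (B \<union> C)"
  proof (rule independent_if_scalars_zero)
    fix u x assume sum0: "(\<Sum>x\<in>B \<union> C. u x *s x) = 0" and x: "x \<in> B \<union> C"
    let ?y = "\<Sum>x\<in>B. u x *s x" and ?z = "\<Sum>x\<in>C. u x *s x"
    have yz: "?y + ?z = 0"
      using sum0 sum.union_disjoint[OF S(4) T(4) disj, of "\<lambda>x. u x *s x"] by simp
    have "?y \<in> S"
      using S by (intro subspace_sum subspace_scale) auto
    moreover have "?y = - ?z"
      using yz by (simp add: eq_neg_iff_add_eq_0)
    moreover have "- ?z \<in> T"
      using T by (intro subspace_neg subspace_sum subspace_scale) auto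
    ultimately have "?y \<in> S \<inter> T"
      by simp
    then have y0: "?y = 0"
      using ST by blast
    then have z0: "?z = 0"
      using yz by simp
    show "u x = 0"
    proof (cases "x \<in> B")
      case True
      then show ?thesis
        using independentD[OF S(3,4) order_refl] y0 by simp
    next
      case False
      then show ?thesis
        using independentD[OF T(3,4) order_refl] z0 x by simp
    qed
  qed (use S(4) T(4) in simp)
qed

lemma (in vector_space) dim_direct_sum:
  assumes "subspace S" "subspace T" "S \<inter> T = {0}" "finite W" "S \<union> T \<subseteq> span W"
  shows "dim {x + y | x y. x \<in> S \<and> y \<in> T} = dim S + dim T"
proof -
  obtain B where B: "B \<subseteq> S" "independent B" "S \<subseteq> span B" "card B = dim S"
    using basis_exists by blast
  obtain C where C: "C \<subseteq> T" "independent C" "T \<subseteq> span C" "card C = dim T"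
    using basis_exists by blast
  have "B \<subseteq> span W" "C \<subseteq> span W"
    using B(1) C(1) assms(5) by auto
  then have fin: "finite B" "finite C"
    using independent_span_bound[OF assms(4)] B(2) C(2) by auto
  note BC = independent_Un_subspaces[OF assms(1) B(1,2) fin(1) assms(2) C(1,2) fin(2) assms(3)]
  have "B \<union> C \<subseteq> {x + y | x y. x \<in> S \<and> y \<in> T}"
  proof
    fix z assume "z \<in> B \<union> C"
    then have "z = z + 0 \<and> z \<in> S \<and> 0 \<in> T \<or> z = 0 + z \<and> 0 \<in> S \<and> z \<in> T"
      using B(1) C(1) assms(1,2) subspace_0 by auto
    then show "z \<in> {x + y | x y. x \<in> S \<and> y \<in> T}" by blast
  qed
  moreover have "{x + y | x y. x \<in> S \<and> y \<in> T} \<subseteq> span (B \<union> C)"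
  proof clarify
    fix x y assume "x \<in> S" "y \<in> T"
    then have "x \<in> span (B \<union> C)" "y \<in> span (B \<union> C)"
      using B(3) C(3) span_mono[of B "B \<union> C"] span_mono[of C "B \<union> C"] by auto
    then show "x + y \<in> span (B \<union> C)" by (rule span_add)
  qed
  ultimately have "dim {x + y | x y. x \<in> S \<and> y \<in> T} = card (B \<union> C)"
    using BC(1) by (simp add: basis_card_eq_dim)
  then show ?thesis
    using card_Un_disjoint[OF fin BC(2)] B(4) C(4) by simp
qed

lemma (in vector_space_pair) dim_image_eq_inj:
  assumes "Vector_Spaces.linear s1 s2 f" "vs1.subspace S" "inj_on f S"
  shows "vs2.dim (f ` S) = vs1.dim S"
proof -
  interpret f: Vector_Spaces.linear s1 s2 f by fact
  obtain B where B: "B \<subseteq> S" "vs1.independent B" "S \<subseteq> vs1.span B" "card B = vs1.dim S"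
    using vs1.basis_exists by blast
  have span: "vs1.span B = S"
    using B assms(2) vs1.span_subspace by blast
  have "vs2.independent (f ` B)"
    using f.independent_injective_image B(2) assms(3) span by simp
  moreover have "f ` S = vs2.span (f ` B)"
    using f.span_image span by simp
  moreover have "card (f ` B) = card B"
    using card_image inj_on_subset assms(3) B(1) by metis
  ultimately show ?thesis
    using B(4) vs2.dim_span_eq_card_independent by simp
qed

interpretation fvs: vector_space "fscale :: 'k::field \<Rightarrow> ('b \<Rightarrow> 'k) \<Rightarrow> ('b \<Rightarrow> 'k)"
  by unfold_locales (auto simp: fscale_def fun_eq_iff algebra_simps)

definition basis_fun :: "'b \<Rightarrow> 'b \<Rightarrow> 'k::field" where
  "basis_fun x = (\<lambda>y. if y = x then 1 else 0)"

lemma sum_fun_apply: "(sum f A) y = (\<Sum>x\<in>A. f x y)"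
  by (induction A rule: infinite_finite_induct) auto

lemma span_basis_fun:
  assumes "finite X"
  shows "kspan (basis_fun ` X :: ('b \<Rightarrow> 'k::field) set) = {f. \<forall>y. y \<notin> X \<longrightarrow> f y = 0}"
proof
  have "fvs.subspace {f :: 'b \<Rightarrow> 'k. \<forall>y. y \<notin> X \<longrightarrow> f y = 0}"
    by (auto simp: fvs.subspace_def fscale_def)
  then show "kspan (basis_fun ` X) \<subseteq> {f :: 'b \<Rightarrow> 'k. \<forall>y. y \<notin> X \<longrightarrow> f y = 0}"
    by (intro fvs.span_minimal) (auto simp: basis_fun_def)
next
  show "{f :: 'b \<Rightarrow> 'k. \<forall>y. y \<notin> X \<longrightarrow> f y = 0} \<subseteq> kspan (basis_fun ` X)"
  proof
    fix f :: "'b \<Rightarrow> 'k" assume f: "f \<in> {f. \<forall>y. y \<notin> X \<longrightarrow> f y = 0}"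
    have "f = (\<Sum>x\<in>X. fscale (f x) (basis_fun x))"
    proof
      fix y
      have "(\<Sum>x\<in>X. f x * (if y = x then 1 else 0)) = (\<Sum>x\<in>X. if y = x then f y else 0)"
        by (rule sum.cong) auto
      then show "f y = (\<Sum>x\<in>X. fscale (f x) (basis_fun x)) y"
        using f assms by (simp add: sum_fun_apply fscale_def basis_fun_def)
    qed
    also have "\<dots> \<in> kspan (basis_fun ` X)"
      by (intro fvs.span_sum fvs.span_scale fvs.span_base) auto
    finally show "f \<in> kspan (basis_fun ` X)" .
  qed
qed

lemma dim_split_by_support:
  fixes K :: "('b \<Rightarrow> 'k::field) set"
  assumes K: "fvs.subspace K" and P: "finite P" "\<And>f x. f \<in> K \<Longrightarrow> x \<notin> P \<Longrightarrow> f x = 0"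
    and restrict: "\<And>f. f \<in> K \<Longrightarrow> (\<lambda>x. if x \<in> X then f x else 0) \<in> K"
  shows "kdim K = kdim {f \<in> K. \<forall>x\<in>X. f x = 0} + kdim {f \<in> K. \<forall>x. x \<notin> X \<longrightarrow> f x = 0}"
proof -
  let ?S = "{f \<in> K. \<forall>x\<in>X. f x = 0}" and ?T = "{f \<in> K. \<forall>x. x \<notin> X \<longrightarrow> f x = 0}"
  have sub: "fvs.subspace ?S" "fvs.subspace ?T"
    using K by (auto simp: fvs.subspace_def fscale_def)
  have disj: "?S \<inter> ?T = {0}"
    using fvs.subspace_0[OF K] by (auto simp: fun_eq_iff) metis
  have fin: "?S \<union> ?T \<subseteq> kspan (basis_fun ` P)"
    using P by (auto simp: span_basis_fun)
  have sum: "{g + h | g h. g \<in> ?S \<and> h \<in> ?T} = K"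
  proof
    show "{g + h | g h. g \<in> ?S \<and> h \<in> ?T} \<subseteq> K"
      using fvs.subspace_add[OF K] by blast
  next
    show "K \<subseteq> {g + h | g h. g \<in> ?S \<and> h \<in> ?T}"
    proof
      fix f assume f: "f \<in> K"
      let ?h = "\<lambda>x. if x \<in> X then f x else 0"
      have "f - ?h \<in> ?S" "?h \<in> ?T"
        using fvs.subspace_diff[OF K f restrict[OF f]] restrict[OF f] by auto
      moreover have "f = (f - ?h) + ?h" by simp
      ultimately show "f \<in> {g + h | g h. g \<in> ?S \<and> h \<in> ?T}" by blast
    qed
  qed
  show ?thesis
    using fvs.dim_direct_sum[OF sub disj finite_imageI[OF P(1)] fin] sum by simp
qed

section \<open>Walks in a quiver\<close>

fun walk :: "'a set \<Rightarrow> ('a \<Rightarrow> nat) \<Rightarrow> ('a \<Rightarrow> nat) \<Rightarrow> nat \<Rightarrow> 'a list \<Rightarrow> nat \<Rightarrow> bool" where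
  "walk E s t u [] v \<longleftrightarrow> u = v"
| "walk E s t u (a # w) v \<longleftrightarrow> a \<in> E \<and> s a = u \<and> walk E s t (t a) w v"

lemma walk_append: "walk E s t u (xs @ ys) v \<longleftrightarrow> (\<exists>m. walk E s t u xs m \<and> walk E s t m ys v)"
  by (induction xs arbitrary: u) auto

lemma walk_target_unique: "walk E s t u w v \<Longrightarrow> walk E s t u w v' \<Longrightarrow> v = v'"
  by (induction w arbitrary: u) auto

lemma walk_source_unique: "walk E s t u w v \<Longrightarrow> walk E s t u' w v \<Longrightarrow> u = u'"
  by (cases w) auto

lemma walk_endpoints: "walk E s t u w v \<Longrightarrow> w \<noteq> [] \<Longrightarrow> u = s (hd w) \<and> v = t (last w)"
  by (induction w arbitrary: u) (auto simp: neq_Nil_conv)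

lemma walk_map: "walk E s t u w v \<Longrightarrow> walk E (g \<circ> s) (g \<circ> t) (g u) w (g v)"
  by (induction w arbitrary: u) auto

lemma walk_replace_iff:
  assumes "walk E s t u (xs @ a # ys) v"
  shows "walk E s t u (xs @ g @ ys) v \<longleftrightarrow> walk E s t (s a) g (t a)"
proof -
  obtain m where xs: "walk E s t u xs m" and a: "a \<in> E" "s a = m" and ys: "walk E s t (t a) ys v"
    using assms by (auto simp: walk_append)
  show ?thesis
  proof
    assume "walk E s t u (xs @ g @ ys) v"
    then obtain m1 m2 where "walk E s t u xs m1" "walk E s t m1 g m2" "walk E s t m2 ys v"
      by (auto simp: walk_append)
    moreover have "m1 = m" using walk_target_unique[OF xs] \<open>walk E s t u xs m1\<close> by simp
    moreover have "m2 = t a" using walk_source_unique[OF ys] \<open>walk E s t m2 ys v\<close> by simp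
    ultimately show "walk E s t (s a) g (t a)" using a by simp
  next
    assume "walk E s t (s a) g (t a)"
    then show "walk E s t u (xs @ g @ ys) v"
      using xs ys a by (auto simp: walk_append)
  qed
qed

lemma pend_Cons: "pend t (u, a # w) = pend t (t a, w)"
  by (simp add: pend_def)

lemma is_path_iff_walk: "is_path V E s t (u, w) \<longleftrightarrow> u \<in> V \<and> walk E s t u w (pend t (u, w))"
proof -
  have "walk E s t u w v \<longleftrightarrow> set w \<subseteq> E \<and> (w \<noteq> [] \<longrightarrow> s (hd w) = u) \<and>
      (\<forall>i. Suc i < length w \<longrightarrow> t (w ! i) = s (w ! Suc i)) \<and> pend t (u, w) = v" for v
  proof (induction w arbitrary: u)
    case Nil
    then show ?case by (simp add: pend_def)
  next
    case (Cons a w)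
    have "(\<forall>i. Suc i < length (a # w) \<longrightarrow> t ((a # w) ! i) = s ((a # w) ! Suc i)) \<longleftrightarrow>
        (w \<noteq> [] \<longrightarrow> t a = s (hd w)) \<and> (\<forall>i. Suc i < length w \<longrightarrow> t (w ! i) = s (w ! Suc i))"
      by (cases w) (auto simp: All_less_Suc2 less_Suc_eq_0_disj)
    then show ?case
      using Cons.IH[of "t a"] by (auto simp: pend_Cons)
  qed
  then show ?thesis
    by (auto simp: is_path_def)
qed

lemma walk_pend: "walk E s t u w v \<Longrightarrow> pend t (u, w) = v"
  by (cases "w = []") (auto simp: pend_def dest: walk_endpoints)

lemma basis_paths_iff_walk:
  "(u, w) \<in> basis_paths V E s t Z \<longleftrightarrow>
     u \<in> V \<and> walk E s t u w (pend t (u, w)) \<and> (\<forall>r\<in>Z. \<not> sublist r w)"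
  by (simp add: basis_paths_def is_path_iff_walk)

lemma par1_walk: "(a, p) \<in> par1 V E s t Z \<Longrightarrow> walk E s t (s a) (snd p) (t a)"
  by (cases p) (simp add: par1_def basis_paths_iff_walk)

lemma walk_sublist_junction: "walk E s t u w v \<Longrightarrow> sublist [c, b] w \<Longrightarrow> t c = s b"
  by (auto simp: sublist_def walk_append)

lemma walk_reinsert:
  assumes "walk E s t u (xs @ g @ ys) v" "walk E s t (s a) g (t a)" "g \<noteq> []" "a \<in> E"
  shows "walk E s t u (xs @ a # ys) v"
proof -
  obtain m1 m2 where "walk E s t u xs m1" "walk E s t m1 g m2" "walk E s t m2 ys v"
    using assms(1) by (auto simp: walk_append)
  moreover have "m1 = s a" "m2 = t a"
    using walk_endpoints[OF \<open>walk E s t m1 g m2\<close> assms(3)] walk_endpoints[OF assms(2,3)] by simp_all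
  ultimately show ?thesis
    using assms(4) by (auto simp: walk_append)
qed

lemma walk_replicate: "a \<in> E \<Longrightarrow> s a = t a \<Longrightarrow> walk E s t (s a) (replicate k a) (s a)"
  by (induction k) auto

lemma walk_set: "walk E s t u w v \<Longrightarrow> set w \<subseteq> E"
  by (induction w arbitrary: u) auto

section \<open>The coboundary delta1 of a monomial algebra\<close>

lemma delta1_add: "delta1 V E s t Z (f + g) = delta1 V E s t Z f + delta1 V E s t Z g"
  by (auto simp: delta1_def fun_eq_iff sum.distrib distrib_right case_prod_unfold)

lemma subspace_ker_delta1: "fvs.subspace (ker_delta1 V E s t Z :: ('a \<times> 'a path \<Rightarrow> 'k::field) set)"
proof -
  have "delta1 V E s t Z (fscale c f) = fscale c (delta1 V E s t Z f)"
    for f :: "'a \<times> 'a path \<Rightarrow> 'k" and c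
    by (auto simp: delta1_def fscale_def fun_eq_iff sum_distrib_left mult.assoc case_prod_unfold)
  moreover have "delta1 V E s t Z 0 = (0 :: 'a list \<times> 'a path \<Rightarrow> 'k)"
    by (auto simp: delta1_def fun_eq_iff)
  ultimately show ?thesis
    by (auto simp: fvs.subspace_def ker_delta1_def cochains1_def fscale_def zero_fun_def delta1_add)
qed

lemma ker_delta1_outside: "f \<in> ker_delta1 V E s t Z \<Longrightarrow> x \<notin> par1 V E s t Z \<Longrightarrow> f x = 0"
  unfolding ker_delta1_def cochains1_def by blast

definition occurrences :: "nat set \<Rightarrow> 'a set \<Rightarrow> ('a \<Rightarrow> nat) \<Rightarrow> ('a \<Rightarrow> nat) \<Rightarrow> 'a list set \<Rightarrow>
    'a list \<Rightarrow> 'a path \<Rightarrow> 'a \<times> 'a path \<Rightarrow> nat set" where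
  "occurrences V E s t Z r q x =
     {i. i < length r \<and> r ! i = fst x \<and> replace_at s r i (snd x) = q \<and> q \<in> basis_paths V E s t Z}"

lemma delta1_eq: "delta1 V E s t Z f (r, q) =
   (if r \<in> Z then \<Sum>x\<in>par1 V E s t Z. f x * of_nat (card (occurrences V E s t Z r q x)) else 0)"
  by (simp add: delta1_def occurrences_def case_prod_unfold)

lemma snd_replace_at: "snd (replace_at s r i g) = take i r @ snd g @ drop (Suc i) r"
  by (simp add: replace_at_def)

lemma delta1_other_source:
  assumes "fst q \<noteq> s (hd r)"
  shows "delta1 V E s t Z f (r, q) = 0"
proof -
  have "occurrences V E s t Z r q x = {}" for x
    using assms by (auto simp: occurrences_def replace_at_def)
  then show ?thesis by (simp add: delta1_eq)
qed

lemma occurrences_loop: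
  assumes x: "x \<in> par1 V E s t Z" and q: "(s \<alpha>, replicate (m - 1) \<alpha>) \<in> basis_paths V E s t Z"
  shows "occurrences V E s t Z (replicate m \<alpha>) (s \<alpha>, replicate (m - 1) \<alpha>) x =
         (if x = (\<alpha>, (s \<alpha>, [])) then {..<m} else {})"
proof -
  let ?r = "replicate m \<alpha>" and ?q = "(s \<alpha>, replicate (m - 1) \<alpha>)" and ?x = "(\<alpha>, (s \<alpha>, []))"
  obtain a g where x_eq: "x = (a, g)" and g: "fst g = s a"
    using x by (auto simp: par1_def)
  have only_x: "x = ?x" if "i \<in> occurrences V E s t Z ?r ?q x" for i
  proof -
    have i: "i < m" "a = \<alpha>" "replace_at s ?r i g = ?q"
      using that by (auto simp: occurrences_def x_eq)
    have "i + length (snd g) + (m - Suc i) = length (snd (replace_at s ?r i g))"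
      using i(1) by (simp add: replace_at_def)
    also have "\<dots> = m - 1"
      using i(3) by simp
    finally have "length (snd g) = 0"
      using i(1) by arith
    then show ?thesis
      using g i(2) x_eq by (cases g) auto
  qed
  have all_i: "replace_at s ?r i (s \<alpha>, []) = ?q" if "i < m" for i
  proof -
    have "take i ?r @ drop (Suc i) ?r = replicate i \<alpha> @ replicate (m - Suc i) \<alpha>"
      using that by simp
    also have "\<dots> = replicate (i + (m - Suc i)) \<alpha>"
      by (simp only: replicate_add)
    also have "\<dots> = replicate (m - 1) \<alpha>"
      using that by simp
    finally have "take i ?r @ drop (Suc i) ?r = replicate (m - 1) \<alpha>" .
    then show ?thesis
      using that by (simp add: replace_at_def)
  qed
  show ?thesis
  proof (cases "x = ?x")
    case True
    have "occurrences V E s t Z ?r ?q ?x = {..<m}"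
      using all_i q by (auto simp: occurrences_def)
    then show ?thesis
      using True by simp
  next
    case False
    then show ?thesis
      using only_x by auto
  qed
qed

lemma ker_delta1_loop_vanishes:
  fixes f :: "'a \<times> 'a path \<Rightarrow> 'k::field"
  assumes f: "f \<in> ker_delta1 V E s t Z" and fin: "finite (par1 V E s t Z)"
    and r: "replicate m \<alpha> \<in> Z" and m: "(of_nat m :: 'k) \<noteq> 0"
    and q: "(s \<alpha>, replicate (m - 1) \<alpha>) \<in> basis_paths V E s t Z"
  shows "f (\<alpha>, (s \<alpha>, [])) = 0"
proof -
  let ?r = "replicate m \<alpha>" and ?q = "(s \<alpha>, replicate (m - 1) \<alpha>)" and ?x = "(\<alpha>, (s \<alpha>, []))"
  have "0 = delta1 V E s t Z f (?r, ?q)"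
    using f by (simp add: ker_delta1_def)
  also have "\<dots> = (\<Sum>x\<in>par1 V E s t Z. f x * of_nat (card (occurrences V E s t Z ?r ?q x)))"
    using r by (simp add: delta1_eq)
  also have "\<dots> = (\<Sum>x\<in>par1 V E s t Z. if x = ?x then f ?x * of_nat m else 0)"
  proof (rule sum.cong)
    fix x assume "x \<in> par1 V E s t Z"
    then show "f x * of_nat (card (occurrences V E s t Z ?r ?q x)) = (if x = ?x then f ?x * of_nat m else 0)"
      using occurrences_loop[OF _ q, of x] by simp
  qed simp
  also have "\<dots> = f ?x * of_nat m"
    using f fin by (auto simp: ker_delta1_def cochains1_def)
  finally show ?thesis
    using m by simp
qed

lemma replace_at_walk_iff:
  assumes "walk E s t u r v" "i < length r"
  shows "walk E s t u (snd (replace_at s' r i g)) v \<longleftrightarrow> walk E s t (s (r ! i)) (snd g) (t (r ! i))"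
  using walk_replace_iff[of E s t u "take i r" "r ! i" "drop (Suc i) r" v] assms
  by (simp add: snd_replace_at id_take_nth_drop[symmetric])

lemma delta1_nonzero_witness:
  assumes "delta1 V E s t Z f (r, q) \<noteq> 0"
  obtains x i where "r \<in> Z" "x \<in> par1 V E s t Z" "f x \<noteq> 0" "i \<in> occurrences V E s t Z r q x"
proof -
  have "r \<in> Z" and "(\<Sum>x\<in>par1 V E s t Z. f x * of_nat (card (occurrences V E s t Z r q x))) \<noteq> 0"
    using assms by (auto simp: delta1_eq split: if_splits)
  then obtain x where "x \<in> par1 V E s t Z" "f x * of_nat (card (occurrences V E s t Z r q x)) \<noteq> 0"
    using sum.not_neutral_contains_not_neutral by blast
  moreover obtain i where "i \<in> occurrences V E s t Z r q x"
    using calculation(2) by (metis card.empty mult_zero_right of_nat_0 ex_in_conv)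
  ultimately show ?thesis
    using that \<open>r \<in> Z\<close> by simp
qed

section \<open>Gluing two vertices\<close>

lemma pend_path_star: "pend (glue n \<circ> t) (path_star n p) = glue n (pend t p)"
  by (simp add: pend_def path_star_def)

locale gluing =
  fixes n :: nat and E :: "'a set" and s t :: "'a \<Rightarrow> nat" and Z :: "'a list set"
  assumes monomial: "monomial_data n E s t Z" and two_le_n: "2 \<le> n"
begin

abbreviation "sB \<equiv> glue n \<circ> s"
abbreviation "tB \<equiv> glue n \<circ> t"
abbreviation "ZB \<equiv> glued_Z n E s t Z"
abbreviation "BA \<equiv> basis_paths {1..n} E s t Z"
abbreviation "BB \<equiv> basis_paths {1..n-1} E sB tB ZB"
abbreviation "PA \<equiv> par1 {1..n} E s t Z"
abbreviation "PB \<equiv> par1 {1..n-1} E sB tB ZB"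
abbreviation "KA \<equiv> ker_delta1 {1..n} E s t Z"
abbreviation "KB \<equiv> ker_delta1 {1..n-1} E sB tB ZB"

lemma arrow_ends: "a \<in> E \<Longrightarrow> s a \<in> {1..n} \<and> t a \<in> {1..n}"
  using monomial by (auto simp: monomial_data_def)

lemma relation_walk:
  assumes "r \<in> Z" shows "2 \<le> length r" "walk E s t (s (hd r)) r (t (last r))"
proof -
  show "2 \<le> length r"
    using monomial assms by (auto simp: monomial_data_def)
  moreover have "walk E s t (s (hd r)) r (pend t (s (hd r), r))"
    using monomial assms by (auto simp: monomial_data_def is_path_iff_walk)
  ultimately show "walk E s t (s (hd r)) r (t (last r))"
    by (auto simp: pend_def split: if_splits)
qed

lemma relations_minimal: "r \<in> Z \<Longrightarrow> r' \<in> Z \<Longrightarrow> sublist r r' \<Longrightarrow> r = r'"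
  using monomial by (auto simp: monomial_data_def)

lemma long_paths_contain_relation:
  "\<exists>N. \<forall>x. is_path {1..n} E s t x \<and> N \<le> length (snd x) \<longrightarrow> (\<exists>r\<in>Z. sublist r (snd x))"
  using monomial by (auto simp: monomial_data_def)

lemma glue_range: "v \<in> {1..n} \<Longrightarrow> glue n v \<in> {1..n-1}"
  using two_le_n by (auto simp: glue_def)

lemma glue_eq_iff:
  "v \<in> {1..n} \<Longrightarrow> w \<in> {1..n} \<Longrightarrow> glue n v = glue n w \<longleftrightarrow> v = w \<or> v \<in> {1, n} \<and> w \<in> {1, n}"
  by (auto simp: glue_def)

lemma glue_ends: "v \<in> {1, n} \<Longrightarrow> glue n v = 1"
  by (auto simp: glue_def)

lemma junction_relation:
  "b \<in> E \<Longrightarrow> c \<in> E \<Longrightarrow> t c \<in> {1, n} \<Longrightarrow> s b \<in> {1, n} \<Longrightarrow> t c \<noteq> s b \<Longrightarrow> [c, b] \<in> ZB"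
  by (auto simp: glued_Z_def)

lemma walk_unglue:
  assumes "walk E sB tB u w v" "\<forall>r\<in>ZB. \<not> sublist r w" "w \<noteq> []"
  shows "walk E s t (s (hd w)) w (t (last w))"
  using assms
proof (induction w arbitrary: u)
  case Nil
  then show ?case by simp
next
  case (Cons a w)
  show ?case
  proof (cases "w = []")
    case True
    then show ?thesis using Cons.prems(1) by simp
  next
    case False
    have a: "a \<in> E" and w: "walk E sB tB (tB a) w v"
      using Cons.prems(1) by (simp_all add: comp_def)
    have IH: "walk E s t (s (hd w)) w (t (last w))"
      using Cons.IH[OF w] Cons.prems(2) False by (auto simp: sublist_Cons_right)
    have hw: "hd w \<in> E" "tB a = sB (hd w)"
      using w False by (auto simp: neq_Nil_conv)
    have "sublist [a, hd w] (a # w)"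
      using False by (auto simp: neq_Nil_conv sublist_Cons_right)
    then have "t a = s (hd w)"
      using Cons.prems(2) junction_relation[OF hw(1) a] hw(2) glue_eq_iff arrow_ends a hw(1)
      by (metis comp_apply)
    then show ?thesis
      using a IH False by simp
  qed
qed

lemma glue_basis_iff:
  assumes "walk E s t u w v" "u \<in> {1..n}"
  shows "(glue n u, w) \<in> BB \<longleftrightarrow> (u, w) \<in> BA"
proof -
  have B: "walk E sB tB (glue n u) w (glue n v)"
    using walk_map[OF assms(1)] by simp
  have "\<not> sublist r w" if "r \<in> ZB - Z" for r
    using that walk_sublist_junction[OF assms(1)] by (auto simp: glued_Z_def)
  then have "(\<forall>r\<in>ZB. \<not> sublist r w) \<longleftrightarrow> (\<forall>r\<in>Z. \<not> sublist r w)"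
    by (auto simp: glued_Z_def)
  then show ?thesis
    using assms B glue_range walk_pend[OF B] walk_pend[OF assms(1)]
    by (simp add: basis_paths_iff_walk)
qed

lemma relation_nonempty: "r \<in> Z \<Longrightarrow> r \<noteq> []"
  using relation_walk(1) by fastforce

lemma trivial_path_basis: "v \<in> {1..n} \<Longrightarrow> (v, []) \<in> BA"
  using relation_nonempty by (simp add: basis_paths_iff_walk pend_def)

lemma basis_walk: "p \<in> BA \<Longrightarrow> fst p \<in> {1..n} \<and> walk E s t (fst p) (snd p) (pend t p)"
  by (cases p) (simp add: basis_paths_iff_walk)

lemma basis_ends:
  assumes p: "p \<in> BA" shows "fst p \<in> {1..n} \<and> pend t p \<in> {1..n}"
proof (cases "snd p = []")
  case False
  then have "last (snd p) \<in> E"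
    using basis_walk[OF p] walk_set last_in_set by blast
  then show ?thesis
    using p False basis_walk arrow_ends by (simp add: pend_def)
qed (use basis_walk[OF p] in \<open>simp add: pend_def\<close>)

lemma finite_BA: "finite BA"
proof -
  obtain N where N: "\<And>x. is_path {1..n} E s t x \<Longrightarrow> N \<le> length (snd x) \<Longrightarrow> \<exists>r\<in>Z. sublist r (snd x)"
    using long_paths_contain_relation by blast
  have "BA \<subseteq> {1..n} \<times> {w. set w \<subseteq> E \<and> length w \<le> N}"
  proof
    fix x assume x: "x \<in> BA"
    then have "is_path {1..n} E s t x" "\<forall>r\<in>Z. \<not> sublist r (snd x)"
      by (simp_all add: basis_paths_def)
    then have "length (snd x) < N"
      using N not_less by blast
    then show "x \<in> {1..n} \<times> {w. set w \<subseteq> E \<and> length w \<le> N}"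
      using x by (cases x) (auto simp: basis_paths_def is_path_def)
  qed
  moreover have "finite ({1..n} \<times> {w. set w \<subseteq> E \<and> length w \<le> N})"
    using monomial by (intro finite_cartesian_product finite_lists_length_le) (auto simp: monomial_data_def)
  ultimately show ?thesis
    by (rule finite_subset)
qed

lemma glued_basis_paths: "BB = path_star n ` BA"
proof
  show "path_star n ` BA \<subseteq> BB"
  proof
    fix q assume "q \<in> path_star n ` BA"
    then obtain p where p: "p \<in> BA" "q = path_star n p" by blast
    then show "q \<in> BB"
      using basis_walk[OF p(1)] glue_basis_iff[of "fst p" "snd p" "pend t p"] by (simp add: path_star_def)
  qed
next
  show "BB \<subseteq> path_star n ` BA"
  proof
    fix q assume q: "q \<in> BB"
    obtain x w where q_eq: "q = (x, w)" by (cases q)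
    show "q \<in> path_star n ` BA"
    proof (cases "w = []")
      case True
      then have "x \<in> {1..n-1}"
        using q q_eq by (simp add: basis_paths_iff_walk)
      then have "q = path_star n (x, [])" "(x, []) \<in> BA"
        using True q_eq trivial_path_basis by (auto simp: path_star_def glue_def)
      then show ?thesis by blast
    next
      case False
      have B: "walk E sB tB x w (pend tB q)" "\<forall>r\<in>ZB. \<not> sublist r w"
        using q q_eq by (simp_all add: basis_paths_iff_walk)
      have A: "walk E s t (s (hd w)) w (t (last w))"
        using walk_unglue[OF B False] .
      have "x = glue n (s (hd w))"
        using walk_endpoints[OF B(1) False] by simp
      moreover have "s (hd w) \<in> {1..n}"
        using arrow_ends walk_set[OF A] False by (simp add: subset_iff)
      ultimately have "(s (hd w), w) \<in> BA" "q = path_star n (s (hd w), w)"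
        using glue_basis_iff[OF A] q q_eq by (auto simp: path_star_def)
      then show ?thesis by blast
    qed
  qed
qed

lemma finite_BB: "finite BB"
  unfolding glued_basis_paths using finite_BA by (rule finite_imageI)

lemma finite_PA: "finite PA"
  by (rule finite_subset[of _ "E \<times> BA"]) (use monomial finite_BA in \<open>auto simp: par1_def monomial_data_def\<close>)

lemma finite_PB: "finite PB"
  by (rule finite_subset[of _ "E \<times> BB"]) (use monomial finite_BB in \<open>auto simp: par1_def monomial_data_def\<close>)

lemma loop_relation:
  assumes a: "\<alpha> \<in> E" "s \<alpha> = t \<alpha>"
  obtains m where "2 \<le> m" "replicate m \<alpha> \<in> Z" "(s \<alpha>, replicate (m - 1) \<alpha>) \<in> BA"
proof -
  obtain N where N: "\<And>x. is_path {1..n} E s t x \<Longrightarrow> N \<le> length (snd x) \<Longrightarrow> \<exists>r\<in>Z. sublist r (snd x)"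
    using long_paths_contain_relation by blast
  have path: "is_path {1..n} E s t (s \<alpha>, replicate k \<alpha>)" for k
    using walk_replicate[of \<alpha> E s t k] walk_pend[OF walk_replicate[of \<alpha> E s t k]] a arrow_ends[OF a(1)]
    by (simp add: is_path_iff_walk)
  obtain r where r: "r \<in> Z" "sublist r (replicate N \<alpha>)"
    using N[OF path] by auto
  define m where "m = length r"
  have r_eq: "r = replicate m \<alpha>"
    unfolding m_def using set_mono_sublist[OF r(2)] by (intro replicate_eqI) auto
  have m: "2 \<le> m"
    using relation_walk(1)[OF r(1)] by (simp add: m_def)
  have "\<not> sublist r' (replicate (m - 1) \<alpha>)" if r': "r' \<in> Z" for r'
  proof
    assume sub: "sublist r' (replicate (m - 1) \<alpha>)"
    have "sublist (replicate (m - 1) \<alpha>) r"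
      using m r_eq by (cases m) (auto simp: sublist_Cons_right)
    then have "r' = r"
      using relations_minimal[OF r' r(1)] sub sublist_order.order_trans by blast
    then show False
      using sublist_length_le[OF sub] m r_eq by simp
  qed
  then have "(s \<alpha>, replicate (m - 1) \<alpha>) \<in> BA"
    using path by (simp add: basis_paths_def)
  then show ?thesis
    using that m r(1) r_eq by blast
qed

definition special_pairs :: "('a \<times> 'a path) set" where
  "special_pairs = {(\<alpha>, path_star n p) | \<alpha> p. special_pair n E s t Z \<alpha> p}"

definition glued_loops :: "('a \<times> 'a path) set" where
  "glued_loops = {(\<alpha>, (1, [])) | \<alpha>. \<alpha> \<in> E \<and> s \<alpha> = t \<alpha> \<and> s \<alpha> \<in> {1, n}}"

abbreviation glue_pair :: "'a \<times> 'a path \<Rightarrow> 'a \<times> 'a path" where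
  "glue_pair \<equiv> apsnd (path_star n)"

lemma special_pairs_subset: "special_pairs \<subseteq> PB"
proof
  fix x assume "x \<in> special_pairs"
  then obtain \<alpha> p where x: "x = (\<alpha>, path_star n p)" and sp: "special_pair n E s t Z \<alpha> p"
    by (auto simp: special_pairs_def)
  then have \<alpha>: "\<alpha> \<in> E" "p \<in> BA" "glue n (s \<alpha>) = glue n (fst p)" "glue n (t \<alpha>) = glue n (pend t p)"
    by (simp_all add: special_pair_def)
  then have "path_star n p \<in> BB" "sB \<alpha> = fst (path_star n p)" "tB \<alpha> = pend tB (path_star n p)"
    using glued_basis_paths pend_path_star[of n t p] by (auto simp: path_star_def)
  then show "x \<in> PB"
    using x \<alpha>(1) by (simp add: par1_def)
qed

lemma glued_loops_special: "glued_loops \<subseteq> special_pairs"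
proof
  fix x assume "x \<in> glued_loops"
  then obtain \<alpha> where x: "x = (\<alpha>, (1, []))" and \<alpha>: "\<alpha> \<in> E" "s \<alpha> = t \<alpha>" "s \<alpha> \<in> {1, n}"
    by (auto simp: glued_loops_def)
  define v where "v = (if s \<alpha> = 1 then n else 1)"
  have v: "v \<in> {1..n}" "v \<in> {1, n}" "v \<noteq> s \<alpha>"
    using two_le_n \<alpha>(3) by (auto simp: v_def)
  then have "special_pair n E s t Z \<alpha> (v, [])"
    using \<alpha> trivial_path_basis glue_ends by (auto simp: special_pair_def pend_def)
  then have "(\<alpha>, path_star n (v, [])) \<in> special_pairs"
    unfolding special_pairs_def by blast
  then show "x \<in> special_pairs"
    using x v glue_ends by (simp add: path_star_def)
qed

lemma special_pair_not_walk:
  assumes "x \<in> special_pairs" "x \<notin> glued_loops"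
  shows "\<not> walk E s t (s (fst x)) (snd (snd x)) (t (fst x))"
proof
  assume walk: "walk E s t (s (fst x)) (snd (snd x)) (t (fst x))"
  obtain \<alpha> p where x: "x = (\<alpha>, path_star n p)" and sp: "special_pair n E s t Z \<alpha> p"
    using assms(1) by (auto simp: special_pairs_def)
  have p: "\<alpha> \<in> E" "p \<in> BA" "glue n (s \<alpha>) = glue n (fst p)" "\<not> (s \<alpha> = fst p \<and> t \<alpha> = pend t p)"
    using sp by (auto simp: special_pair_def)
  have \<alpha>p: "walk E s t (s \<alpha>) (snd p) (t \<alpha>)"
    using walk x by (simp add: path_star_def)
  note pwalk = basis_walk[OF p(2)]
  show False
  proof (cases "snd p = []")
    case False
    then show False
      using walk_endpoints[OF \<alpha>p False] walk_endpoints[OF conjunct2[OF pwalk] False] p(4) by simp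
  next
    case True
    then have "s \<alpha> = t \<alpha>" "pend t p = fst p"
      using \<alpha>p by (simp_all add: pend_def)
    then have "s \<alpha> \<noteq> fst p"
      using p(4) by auto
    then have "s \<alpha> \<in> {1, n}" "fst p \<in> {1, n}"
      using glue_eq_iff[of "s \<alpha>" "fst p"] arrow_ends[OF p(1)] pwalk p(3) by auto
    then have "x = (\<alpha>, (1, []))"
      using x True glue_ends by (cases p) (simp add: path_star_def)
    then show False
      using assms(2) p(1) \<open>s \<alpha> = t \<alpha>\<close> \<open>s \<alpha> \<in> {1, n}\<close> by (auto simp: glued_loops_def)
  qed
qed

lemma glue_pair_PB:
  assumes "x \<in> PA" shows "glue_pair x \<in> PB"
proof -
  obtain a p where x: "x = (a, p)" "a \<in> E" "p \<in> BA" "s a = fst p" "t a = pend t p"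
    using assms by (cases x) (auto simp: par1_def)
  have "path_star n p \<in> BB"
    using glued_basis_paths x(3) by blast
  then show ?thesis
    using x pend_path_star[of n t p] by (simp add: par1_def path_star_def)
qed

lemma glue_pair_inj: "inj_on glue_pair PA"
proof
  fix x y assume "x \<in> PA" "y \<in> PA" "glue_pair x = glue_pair y"
  then show "x = y"
    by (cases x, cases y) (auto simp: par1_def path_star_def prod_eq_iff)
qed

lemma glue_pair_special: "x \<in> PA \<Longrightarrow> glue_pair x \<in> special_pairs \<Longrightarrow> glue_pair x \<in> glued_loops"
  using special_pair_not_walk[of "glue_pair x"] par1_walk[of "fst x" "snd x"]
  by (cases x) (auto simp: path_star_def)

lemma unspecial_pair_lifts:
  assumes x: "x \<in> PB" "x \<notin> special_pairs"
  shows "x \<in> glue_pair ` PA"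
proof -
  obtain a q where x_eq: "x = (a, q)" by (cases x)
  have a: "a \<in> E" "q \<in> BB" "sB a = fst q" "tB a = pend tB q"
    using x x_eq by (auto simp: par1_def)
  then obtain p where p: "p \<in> BA" "q = path_star n p"
    using glued_basis_paths by auto
  have glued: "glue n (s a) = glue n (fst p)" "glue n (t a) = glue n (pend t p)"
    using a(3,4) p(2) pend_path_star[of n t p] by (simp_all add: path_star_def)
  have "s a = fst p \<and> t a = pend t p"
  proof (rule ccontr)
    assume np: "\<not> (s a = fst p \<and> t a = pend t p)"
    have "fst p \<in> {1..n}" "pend t p \<in> {1..n}"
      using basis_ends[OF p(1)] by simp_all
    then have "s a \<in> {1, n} \<or> t a \<in> {1, n}"
      using np glued glue_eq_iff[of "s a" "fst p"] glue_eq_iff[of "t a" "pend t p"] arrow_ends[OF a(1)]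
      by auto
    then have "special_pair n E s t Z a p"
      using a(1) p(1) glued np by (simp add: special_pair_def)
    then have "(a, path_star n p) \<in> special_pairs"
      unfolding special_pairs_def by blast
    then show False
      using x(2) x_eq p(2) by simp
  qed
  then have "(a, p) \<in> PA"
    using a(1) p(1) by (simp add: par1_def)
  then show ?thesis
    using x_eq p(2) rev_image_eqI[of "(a, p)" PA "(a, q)" glue_pair] by simp
qed

definition pull :: "('a \<times> 'a path \<Rightarrow> 'k) \<Rightarrow> 'a \<times> 'a path \<Rightarrow> 'k::field" where
  "pull h = (\<lambda>x. if x \<in> PA then h (glue_pair x) else 0)"

lemma junction_relation_no_occurrence:
  assumes r: "r \<in> ZB" "r \<notin> Z" and ap: "(a, p) \<in> PA" and nS: "glue_pair (a, p) \<notin> special_pairs"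
  shows "occurrences {1..n-1} E sB tB ZB r q (glue_pair (a, p)) = {}"
proof (rule equals0I)
  fix i assume i: "i \<in> occurrences {1..n-1} E sB tB ZB r q (glue_pair (a, p))"
  obtain b c where bc: "r = [c, b]" "t c \<in> {1, n}" "s b \<in> {1, n}" "t c \<noteq> s b"
    using r by (auto simp: glued_Z_def)
  have i': "i < length r" "r ! i = a" "q = replace_at sB r i (path_star n p)" "q \<in> BB"
    using i by (auto simp: occurrences_def)
  have q: "snd q = take i r @ snd p @ drop (Suc i) r"
    using i'(3) by (simp add: snd_replace_at path_star_def)
  have a: "a \<in> E" "fst p = s a" and pw: "walk E s t (s a) (snd p) (t a)"
    using ap par1_walk[OF ap] by (simp_all add: par1_def)
  show False
  proof (cases "snd p = []")
    case True
    have "a \<in> {c, b}"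
      using i'(1,2) bc(1) by (auto simp: nth_Cons split: nat.splits)
    then have "s a = t a" "s a \<in> {1, n}"
      using pw True bc by auto
    then have "glue_pair (a, p) \<in> glued_loops"
      using a True glue_ends by (cases p) (auto simp: glued_loops_def path_star_def)
    then show False
      using glued_loops_special nS by blast
  next
    case False
    have B: "walk E sB tB (fst q) (snd q) (pend tB q)" "\<forall>r\<in>ZB. \<not> sublist r (snd q)"
      using i'(4) basis_paths_iff_walk[of "fst q" "snd q"] by simp_all
    have "snd q \<noteq> []"
      using q False by simp
    then have "walk E s t (s (hd (snd q))) (take i r @ snd p @ drop (Suc i) r) (t (last (snd q)))"
      using walk_unglue[OF B] q by simp
    then have "walk E s t (s (hd (snd q))) (take i r @ a # drop (Suc i) r) (t (last (snd q)))"
      using walk_reinsert[OF _ pw False a(1)] by blast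
    moreover have "take i r @ a # drop (Suc i) r = r"
      using id_take_nth_drop[OF i'(1)] i'(2) by simp
    ultimately have "walk E s t (s (hd (snd q))) r (t (last (snd q)))"
      by simp
    then show False
      using walk_sublist_junction[of E s t _ r _ c b] bc(1,4) by simp
  qed
qed

lemma new_relation_row:
  fixes h :: "'a \<times> 'a path \<Rightarrow> 'k::field"
  assumes hS: "\<And>x. x \<in> special_pairs \<Longrightarrow> h x = 0" and r: "r \<in> ZB" "r \<notin> Z"
  shows "delta1 {1..n-1} E sB tB ZB h (r, q) = 0"
proof (rule ccontr)
  assume "delta1 {1..n-1} E sB tB ZB h (r, q) \<noteq> 0"
  then obtain x i where x: "x \<in> PB" "h x \<noteq> 0" and i: "i \<in> occurrences {1..n-1} E sB tB ZB r q x"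
    by (rule delta1_nonzero_witness)
  have "x \<notin> special_pairs"
    using hS x(2) by blast
  moreover obtain a p where "(a, p) \<in> PA" "x = glue_pair (a, p)"
    using unspecial_pair_lifts[OF x(1) calculation] by auto
  ultimately show False
    using junction_relation_no_occurrence[OF r] i by blast
qed

lemma occurrences_glue_pair:
  assumes r: "r \<in> Z" and x: "x \<in> PA" and q: "fst q = sB (hd r)"
  shows "occurrences {1..n-1} E sB tB ZB r q (glue_pair x) =
         occurrences {1..n} E s t Z r (s (hd r), snd q) x"
proof -
  obtain a p where x_eq: "x = (a, p)" by (cases x)
  have rw: "walk E s t (s (hd r)) r (t (last r))"
    using relation_walk(2)[OF r] .
  have hd_r: "s (hd r) \<in> {1..n}"
    using arrow_ends walk_set[OF rw] relation_nonempty[OF r] by (simp add: subset_iff)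
  have basis_iff: "q \<in> BB \<longleftrightarrow> (s (hd r), snd q) \<in> BA"
    if i: "i < length r" "r ! i = a" and sq: "snd q = take i r @ snd p @ drop (Suc i) r" for i
  proof -
    have "walk E s t (s (hd r)) (snd q) (t (last r))"
      using replace_at_walk_iff[OF rw i(1), of sB p] par1_walk[of a p] x x_eq i(2) sq
      by (simp add: snd_replace_at)
    then show ?thesis
      using glue_basis_iff[OF _ hd_r] q by (cases q) simp
  qed
  have replaceB: "replace_at sB r i (path_star n p) = q \<longleftrightarrow> snd q = take i r @ snd p @ drop (Suc i) r" for i
    using q by (cases q) (auto simp: replace_at_def path_star_def)
  have replaceA: "replace_at s r i p = (s (hd r), snd q) \<longleftrightarrow> snd q = take i r @ snd p @ drop (Suc i) r" for i
    by (auto simp: replace_at_def)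
  show ?thesis
  proof (rule set_eqI)
    fix i
    show "i \<in> occurrences {1..n-1} E sB tB ZB r q (glue_pair x) \<longleftrightarrow>
          i \<in> occurrences {1..n} E s t Z r (s (hd r), snd q) x"
      using basis_iff[of i] replaceB[of i] replaceA[of i] x_eq by (auto simp: occurrences_def)
  qed
qed

lemma old_relation_row:
  fixes h :: "'a \<times> 'a path \<Rightarrow> 'k::field"
  assumes hS: "\<And>x. x \<in> special_pairs \<Longrightarrow> h x = 0" and r: "r \<in> Z" and q: "fst q = sB (hd r)"
  shows "delta1 {1..n-1} E sB tB ZB h (r, q) = delta1 {1..n} E s t Z (pull h) (r, (s (hd r), snd q))"
proof -
  let ?cB = "\<lambda>x. of_nat (card (occurrences {1..n-1} E sB tB ZB r q x)) :: 'k"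
  let ?cA = "\<lambda>x. of_nat (card (occurrences {1..n} E s t Z r (s (hd r), snd q) x)) :: 'k"
  have "(\<Sum>x\<in>PB. h x * ?cB x) = (\<Sum>x\<in>glue_pair ` PA. h x * ?cB x)"
  proof (rule sum.mono_neutral_right[OF finite_PB])
    show "glue_pair ` PA \<subseteq> PB"
      using glue_pair_PB by blast
    show "\<forall>x\<in>PB - glue_pair ` PA. h x * ?cB x = 0"
      using unspecial_pair_lifts hS by (metis DiffE mult_zero_left)
  qed
  also have "\<dots> = (\<Sum>x\<in>PA. h (glue_pair x) * ?cB (glue_pair x))"
    by (rule sum.reindex[OF glue_pair_inj, unfolded comp_def])
  also have "\<dots> = (\<Sum>x\<in>PA. pull h x * ?cA x)"
  proof (rule sum.cong)
    fix x assume "x \<in> PA"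
    then show "h (glue_pair x) * ?cB (glue_pair x) = pull h x * ?cA x"
      using occurrences_glue_pair[OF r _ q, of x] by (simp add: pull_def)
  qed simp
  finally show ?thesis
    using r by (simp add: delta1_eq glued_Z_def)
qed

lemma delta1_glued_zero_iff:
  fixes h :: "'a \<times> 'a path \<Rightarrow> 'k::field"
  assumes hS: "\<And>x. x \<in> special_pairs \<Longrightarrow> h x = 0"
  shows "delta1 {1..n-1} E sB tB ZB h = (\<lambda>_. 0) \<longleftrightarrow> delta1 {1..n} E s t Z (pull h) = (\<lambda>_. 0)"
proof
  assume B: "delta1 {1..n-1} E sB tB ZB h = (\<lambda>_. 0)"
  show "delta1 {1..n} E s t Z (pull h) = (\<lambda>_. 0)"
  proof (rule ext, clarify)
    fix r q
    show "delta1 {1..n} E s t Z (pull h) (r, q) = 0"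
    proof (cases "r \<in> Z \<and> fst q = s (hd r)")
      case True
      then show ?thesis
        using old_relation_row[where h = h and r = r and q = "(sB (hd r), snd q)", OF hS] B by (cases q) simp
    next
      case False
      then show ?thesis
        by (cases "r \<in> Z") (simp_all add: delta1_other_source, simp add: delta1_eq)
    qed
  qed
next
  assume A: "delta1 {1..n} E s t Z (pull h) = (\<lambda>_. 0)"
  show "delta1 {1..n-1} E sB tB ZB h = (\<lambda>_. 0)"
  proof (rule ext, clarify)
    fix r q
    show "delta1 {1..n-1} E sB tB ZB h (r, q) = 0"
    proof (cases "r \<in> Z")
      case r: True
      show ?thesis
      proof (cases "fst q = sB (hd r)")
        case True
        then show ?thesis
          using old_relation_row[where h = h, OF hS r True] A by simp
      next
        case False
        then show ?thesis
          by (rule delta1_other_source)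
      qed
    next
      case False
      then show ?thesis
        using new_relation_row[where h = h, OF hS] by (cases "r \<in> ZB") (auto simp: delta1_eq)
    qed
  qed
qed

lemma special_occurrences_disjoint:
  assumes r: "r \<in> Z" and ap: "(a, p) \<in> PA" and y: "y \<in> special_pairs" "y \<notin> glued_loops"
    and i: "i \<in> occurrences {1..n-1} E sB tB ZB r q (glue_pair (a, p))"
  shows "occurrences {1..n-1} E sB tB ZB r q y = {}"
proof (rule equals0I)
  fix j assume j: "j \<in> occurrences {1..n-1} E sB tB ZB r q y"
  note rw = relation_walk(2)[OF r]
  have i': "i < length r" "r ! i = a" "q = replace_at sB r i (path_star n p)"
    using i by (auto simp: occurrences_def)
  have j': "j < length r" "r ! j = fst y" "q = replace_at sB r j (snd y)"
    using j by (auto simp: occurrences_def)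
  have "walk E s t (s (hd r)) (snd q) (t (last r))"
    using replace_at_walk_iff[OF rw i'(1), of sB "path_star n p"] par1_walk[OF ap] i'
    by (simp add: path_star_def)
  then have "walk E s t (s (fst y)) (snd (snd y)) (t (fst y))"
    using replace_at_walk_iff[OF rw j'(1), of sB "snd y"] j' by simp
  then show False
    using special_pair_not_walk[OF y] by simp
qed

lemma special_restriction_ker:
  fixes f :: "'a \<times> 'a path \<Rightarrow> 'k::field"
  assumes f: "f \<in> KB" and loops: "\<And>x. x \<in> glued_loops \<Longrightarrow> f x = 0"
  shows "(\<lambda>x. if x \<in> special_pairs then f x else 0) \<in> KB"
proof -
  define fS where "fS = (\<lambda>x. if x \<in> special_pairs then f x else 0)"
  define fT where "fT = (\<lambda>x. if x \<in> special_pairs then 0 else f x)"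
  let ?\<delta> = "delta1 {1..n-1} E sB tB ZB"
  have "fT + fS = f"
    by (simp add: fT_def fS_def fun_eq_iff)
  then have split: "?\<delta> fT + ?\<delta> fS = ?\<delta> f"
    by (metis delta1_add)
  have sum0: "?\<delta> fT (r, q) + ?\<delta> fS (r, q) = 0" for r q
    using f fun_cong[OF split, of "(r, q)"] by (simp add: ker_delta1_def)
  have one_vanishes: "?\<delta> fT (r, q) = 0 \<or> ?\<delta> fS (r, q) = 0" for r q
  proof (rule ccontr)
    assume both: "\<not> (?\<delta> fT (r, q) = 0 \<or> ?\<delta> fS (r, q) = 0)"
    then obtain x i y j where rB: "r \<in> ZB"
      and x: "x \<in> PB" "fT x \<noteq> 0" "i \<in> occurrences {1..n-1} E sB tB ZB r q x"
      and y: "y \<in> PB" "fS y \<noteq> 0" "j \<in> occurrences {1..n-1} E sB tB ZB r q y"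
      by (metis delta1_nonzero_witness)
    have "r \<in> Z"
      using new_relation_row[where h = fT and r = r and q = q] rB both by (auto simp: fT_def)
    moreover have "x \<notin> special_pairs"
      using x(2) by (auto simp: fT_def)
    then obtain a p where "(a, p) \<in> PA" "x = glue_pair (a, p)"
      using unspecial_pair_lifts[OF x(1)] by auto
    moreover have "y \<in> special_pairs" "f y \<noteq> 0"
      using y(2) by (auto simp: fS_def split: if_splits)
    ultimately show False
      using special_occurrences_disjoint[of r a p y i q] loops x(3) y(3) by blast
  qed
  have "?\<delta> fS = (\<lambda>_. 0)"
  proof (rule ext, clarify)
    fix r q
    show "?\<delta> fS (r, q) = 0"
      using one_vanishes[of r q] sum0[of r q] by auto
  qed
  moreover have "fS \<in> cochains1 {1..n-1} E sB tB ZB"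
    using special_pairs_subset by (auto simp: fS_def cochains1_def)
  ultimately show ?thesis
    by (simp add: ker_delta1_def fS_def)
qed

definition loop_orders_invertible :: "'k::field itself \<Rightarrow> bool" where
  "loop_orders_invertible _ \<longleftrightarrow> (\<forall>\<alpha> m. \<alpha> \<in> E \<longrightarrow> s \<alpha> = t \<alpha> \<longrightarrow> s \<alpha> \<in> {1, n} \<longrightarrow> 2 \<le> m \<longrightarrow>
     replicate m \<alpha> \<in> Z \<longrightarrow> (of_nat m :: 'k) \<noteq> 0)"

lemma ker_A_loops_vanish:
  fixes f :: "'a \<times> 'a path \<Rightarrow> 'k::field"
  assumes char: "loop_orders_invertible TYPE('k)"
    and f: "f \<in> KA" and \<alpha>: "\<alpha> \<in> E" "s \<alpha> = t \<alpha>" "s \<alpha> \<in> {1, n}"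
  shows "f (\<alpha>, (s \<alpha>, [])) = 0"
proof -
  obtain m where m: "2 \<le> m" "replicate m \<alpha> \<in> Z" "(s \<alpha>, replicate (m - 1) \<alpha>) \<in> BA"
    using loop_relation[OF \<alpha>(1,2)] .
  have "(of_nat m :: 'k) \<noteq> 0"
    using char \<alpha> m(1,2) unfolding loop_orders_invertible_def by blast
  then show ?thesis
    using ker_delta1_loop_vanishes[OF f finite_PA m(2)] m(3) by simp
qed

lemma ker_B_glued_loops_vanish:
  fixes f :: "'a \<times> 'a path \<Rightarrow> 'k::field"
  assumes char: "loop_orders_invertible TYPE('k)"
    and f: "f \<in> KB" and x: "x \<in> glued_loops"
  shows "f x = 0"
proof -
  obtain \<alpha> where x_eq: "x = (\<alpha>, (1, []))" and \<alpha>: "\<alpha> \<in> E" "s \<alpha> = t \<alpha>" "s \<alpha> \<in> {1, n}"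
    using x by (auto simp: glued_loops_def)
  obtain m where m: "2 \<le> m" "replicate m \<alpha> \<in> Z" "(s \<alpha>, replicate (m - 1) \<alpha>) \<in> BA"
    using loop_relation[OF \<alpha>(1,2)] .
  have "(of_nat m :: 'k) \<noteq> 0"
    using char \<alpha> m(1,2) unfolding loop_orders_invertible_def by blast
  moreover have "(sB \<alpha>, replicate (m - 1) \<alpha>) \<in> BB"
    using glued_basis_paths m(3) by (force simp: path_star_def)
  moreover have "replicate m \<alpha> \<in> ZB"
    using m(2) by (simp add: glued_Z_def)
  ultimately have "f (\<alpha>, (sB \<alpha>, [])) = 0"
    using ker_delta1_loop_vanishes[OF f finite_PB] by simp
  then show ?thesis
    using x_eq \<alpha>(3) glue_ends by simp
qed

lemma linear_pull: "Vector_Spaces.linear fscale fscale (pull :: ('a \<times> 'a path \<Rightarrow> 'k::field) \<Rightarrow> _)"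
  by unfold_locales (auto simp: pull_def fscale_def fun_eq_iff)

lemma inj_on_pull: "inj_on pull {h \<in> KB. \<forall>x\<in>special_pairs. h x = 0}"
proof
  fix h1 h2 :: "'a \<times> 'a path \<Rightarrow> 'k::field"
  assume h: "h1 \<in> {h \<in> KB. \<forall>x\<in>special_pairs. h x = 0}" "h2 \<in> {h \<in> KB. \<forall>x\<in>special_pairs. h x = 0}"
    and eq: "pull h1 = pull h2"
  show "h1 = h2"
  proof
    fix y
    show "h1 y = h2 y"
    proof (cases "y \<in> PB - special_pairs")
      case True
      then obtain x where "x \<in> PA" "y = glue_pair x"
        using unspecial_pair_lifts by blast
      then show ?thesis
        using fun_cong[OF eq, of x] by (simp add: pull_def)
    next
      case outside: False
      have hB: "h1 \<in> KB" "h2 \<in> KB" and hS: "\<forall>x\<in>special_pairs. h1 x = 0" "\<forall>x\<in>special_pairs. h2 x = 0"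
        using h by simp_all
      show ?thesis
      proof (cases "y \<in> PB")
        case True
        then show ?thesis
          using outside hS by simp
      next
        case False
        then show ?thesis
          using ker_delta1_outside[OF hB(1) False] ker_delta1_outside[OF hB(2) False] by simp
      qed
    qed
  qed
qed

definition push :: "('a \<times> 'a path \<Rightarrow> 'k) \<Rightarrow> 'a \<times> 'a path \<Rightarrow> 'k::field" where
  "push f = (\<lambda>y. if y \<in> PB - special_pairs then f (the_inv_into PA glue_pair y) else 0)"

lemma pull_push:
  fixes f :: "'a \<times> 'a path \<Rightarrow> 'k::field"
  assumes char: "loop_orders_invertible TYPE('k)" and f: "f \<in> KA"
  shows "pull (push f) = f"
proof
  fix x
  show "pull (push f) x = f x"
  proof (cases "x \<in> PA")
    case True
    show ?thesis
    proof (cases "glue_pair x \<in> special_pairs")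
      case False
      then show ?thesis
        using True glue_pair_PB the_inv_into_f_f[OF glue_pair_inj True] by (simp add: push_def pull_def)
    next
      case special: True
      obtain a p where x_eq: "x = (a, p)" by (cases x)
      have "glue_pair x \<in> glued_loops"
        using glue_pair_special[OF True special] .
      then have "snd p = []" "a \<in> E" "s a = t a" "s a \<in> {1, n}"
        using x_eq by (auto simp: glued_loops_def path_star_def)
      moreover have "fst p = s a"
        using True x_eq by (simp add: par1_def)
      ultimately show ?thesis
        using ker_A_loops_vanish[OF char f] special True x_eq
        by (cases p) (simp add: push_def pull_def)
    qed
  next
    case False
    then show ?thesis
      using ker_delta1_outside[OF f] by (simp add: pull_def)
  qed
qed

lemma pull_image:
  assumes char: "loop_orders_invertible TYPE('k::field)"
  shows "pull ` {h \<in> KB. \<forall>x\<in>special_pairs. h x = 0} = (KA :: ('a \<times> 'a path \<Rightarrow> 'k) set)"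
proof
  show "pull ` {h \<in> KB. \<forall>x\<in>special_pairs. h x = 0} \<subseteq> (KA :: ('a \<times> 'a path \<Rightarrow> 'k) set)"
  proof clarify
    fix h :: "'a \<times> 'a path \<Rightarrow> 'k" assume "h \<in> KB" "\<forall>x\<in>special_pairs. h x = 0"
    then have "delta1 {1..n} E s t Z (pull h) = (\<lambda>_. 0)"
      using delta1_glued_zero_iff[of h] by (simp add: ker_delta1_def)
    then show "pull h \<in> KA"
      by (simp add: ker_delta1_def cochains1_def pull_def)
  qed
next
  show "(KA :: ('a \<times> 'a path \<Rightarrow> 'k) set) \<subseteq> pull ` {h \<in> KB. \<forall>x\<in>special_pairs. h x = 0}"
  proof
    fix f :: "'a \<times> 'a path \<Rightarrow> 'k" assume f: "f \<in> KA"
    have hS: "\<forall>x\<in>special_pairs. push f x = 0"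
      by (simp add: push_def)
    then have "delta1 {1..n-1} E sB tB ZB (push f) = (\<lambda>_. 0)"
      using delta1_glued_zero_iff[of "push f"] f pull_push[OF char f] by (simp add: ker_delta1_def)
    then have "push f \<in> {h \<in> KB. \<forall>x\<in>special_pairs. h x = 0}"
      using hS by (simp add: ker_delta1_def cochains1_def push_def)
    then show "f \<in> pull ` {h \<in> KB. \<forall>x\<in>special_pairs. h x = 0}"
      by (rule rev_image_eqI) (simp add: pull_push[OF char f])
  qed
qed

lemma dim_ker_glued:
  assumes char: "loop_orders_invertible TYPE('k::field)"
  shows "kdim (KB :: ('a \<times> 'a path \<Rightarrow> 'k) set) =
         kdim (KA :: ('a \<times> 'a path \<Rightarrow> 'k) set) +
         kdim (KB \<inter> kspan (basis_fun ` special_pairs) :: ('a \<times> 'a path \<Rightarrow> 'k) set)"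
proof -
  let ?KT = "{h \<in> KB. \<forall>x\<in>special_pairs. h x = 0} :: ('a \<times> 'a path \<Rightarrow> 'k) set"
  let ?KS = "{h \<in> KB. \<forall>x. x \<notin> special_pairs \<longrightarrow> h x = 0} :: ('a \<times> 'a path \<Rightarrow> 'k) set"
  have restrict: "(\<lambda>x. if x \<in> special_pairs then f x else 0) \<in> KB"
    if "f \<in> KB" for f :: "'a \<times> 'a path \<Rightarrow> 'k"
    using special_restriction_ker[OF that] ker_B_glued_loops_vanish[OF char that] by blast
  have "kdim (KB :: ('a \<times> 'a path \<Rightarrow> 'k) set) = kdim ?KT + kdim ?KS"
    by (rule dim_split_by_support) (use subspace_ker_delta1 finite_PB ker_delta1_outside restrict in auto)
  moreover have "KB \<inter> kspan (basis_fun ` special_pairs) = ?KS"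
    using span_basis_fun[OF finite_subset[OF special_pairs_subset finite_PB]] by auto
  moreover have "kdim ?KT = kdim (KA :: ('a \<times> 'a path \<Rightarrow> 'k) set)"
  proof -
    interpret fvs_pair: vector_space_pair
      "fscale :: 'k \<Rightarrow> _ \<Rightarrow> 'a \<times> 'a path \<Rightarrow> 'k" "fscale :: 'k \<Rightarrow> _ \<Rightarrow> 'a \<times> 'a path \<Rightarrow> 'k" ..
    have "fvs.subspace ?KT"
      using subspace_ker_delta1[of "{1..n-1}" E sB tB ZB] unfolding fvs.subspace_def
      by (auto simp: fscale_def)
    then show ?thesis
      using fvs_pair.dim_image_eq_inj[OF linear_pull _ inj_on_pull] pull_image[OF char] by simp
  qed
  ultimately show ?thesis
    by simp
qed

end

theorem proposition3p17:
  fixes n :: nat and E :: "'a set" and s t :: "'a \<Rightarrow> nat" and Z :: "'a list set"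
  assumes mono: "monomial_data n E s t Z"
    and n2: "2 \<le> n"
    and nonisol1: "\<exists>a\<in>E. s a = 1 \<or> t a = 1"
    and nonisoln: "\<exists>a\<in>E. s a = n \<or> t a = n"
    and charcond: "\<And>\<alpha> m. \<alpha> \<in> E \<Longrightarrow> s \<alpha> = t \<alpha> \<Longrightarrow> s \<alpha> \<in> {1, n} \<Longrightarrow> 2 \<le> m \<Longrightarrow>
                      replicate m \<alpha> \<in> Z \<Longrightarrow> \<not> CHAR('k::field) dvd m"
  shows "kdim (ker_delta1 {1..n-1} E (glue n \<circ> s) (glue n \<circ> t) (glued_Z n E s t Z)
               :: ('a \<times> 'a path \<Rightarrow> 'k) set)
         = kdim (ker_delta1 {1..n} E s t Z :: ('a \<times> 'a path \<Rightarrow> 'k) set)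
           + kspp TYPE('k) n E s t Z"
proof -
  interpret gluing n E s t Z
    using mono n2 by unfold_locales
  have "{(\<lambda>x. if x = (\<alpha>, path_star n p) then 1 else 0) :: 'a \<times> 'a path \<Rightarrow> 'k
          | \<alpha> p. special_pair n E s t Z \<alpha> p} = basis_fun ` special_pairs"
    unfolding special_pairs_def basis_fun_def by blast
  moreover have "loop_orders_invertible TYPE('k)"
    using charcond by (simp add: loop_orders_invertible_def of_nat_eq_0_iff_char_dvd)
  ultimately show ?thesis
    using dim_ker_glued by (simp add: kspp_def)
qed

end
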